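(* Let $n\ge 1$, $s_1,\dots,s_n\in[0,1)$ and $v_1,\dots,v_n\in\mathbb{R}$, and let $k:=|\{v_1,\dots,v_n\}|$ be the number of distinct values among the $v_i$. Then there exists $t\in\mathbb{R}$ such that $$B(s_1+v_1t,\dots,s_n+v_nt)\ \ge\ \sqrt{k/12}.$$
   Context: For $r\in\mathbb{R}$, $\{r\}:=r-\lfloor r\rfloor$ is the fractional part. For $r_1,\dots,r_n\in\mathbb{R}$ and $0\le a\le b\le 1$ let $N_{a,b}(r_1,\dots,r_n):=|\{i:\{r_i\}\in[a,b]\}|$. The bias is $$B(r_1,\dots,r_n):=\sup_{0\le a\le b\le 1}\big|N_{a,b}(r_1,\dots,r_n)-n(b-a)\big|.$$ (Equivalently, it is $n$ times the usual discrepancy of $\{r_1\},\dots,\{r_n\}$.) *)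

theory Defs
  imports "HOL-Analysis.Analysis"
begin

text \<open>Fractional part {r} = r - floor r (library: frac).
  Sequences r_1..r_n are represented as r :: nat => real with indices 0..n-1.\<close>

definition count_in :: "nat \<Rightarrow> (nat \<Rightarrow> real) \<Rightarrow> real \<Rightarrow> real \<Rightarrow> nat" where
  "count_in n r a b = card {i. i < n \<and> frac (r i) \<in> {a..b}}"

definition bias :: "nat \<Rightarrow> (nat \<Rightarrow> real) \<Rightarrow> real" where
  "bias n r = (SUP ab \<in> {(a, b). 0 \<le> a \<and> a \<le> b \<and> b \<le> 1}.
      \<bar>real (count_in n r (fst ab) (snd ab)) - real n * (snd ab - fst ab)\<bar>)"

end

theory Submission
  imports Defs
begin

text \<open>Let \<open>P(y) = y\<^sup>2/2 - y/2 + 1/12\<close>, half the second Bernoulli polynomial, and let the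
  energy of points \<open>x\<^sub>1, \<dots>, x\<^sub>n\<close> be the sum of \<open>P({x\<^sub>i - x\<^sub>j})\<close> over all pairs \<open>(i, j)\<close>. For sorted
  points \<open>y\<^sub>0 \<le> \<dots> \<le> y\<^sub>n\<^sub>-\<^sub>1\<close> in \<open>[0,1)\<close> the energy equals \<open>1/12\<close> plus the sum of
  \<open>(e\<^sub>i - e\<^sub>j)\<^sup>2 / (2n\<^sup>2)\<close>, where \<open>e\<^sub>i = n y\<^sub>i - i\<close>. Counting points in closed and (slightly
  shrunk) open intervals between order statistics shows \<open>|e\<^sub>i - e\<^sub>j| \<le> B - 1\<close> for the bias
  \<open>B\<close>, hence the energy is at most \<open>1/12 + (B - 1)\<^sup>2/2\<close>.

  Along \<open>s + v t\<close> the pairs with equal velocity contribute an amount independent of \<open>t\<close>, at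
  least \<open>1/12\<close> for each of the \<open>k\<close> velocity classes. The other pairs contribute kernels along
  non-constant lines; as \<open>P\<close> has mean zero over a period, their sum has time average tending
  to \<open>0\<close>, so at some \<open>t\<close> it is at least \<open>-1/12\<close>. Then \<open>(k - 1)/12 \<le> 1/12 + (B - 1)\<^sup>2/2\<close>,
  which gives \<open>B \<ge> \<surd>(k/12)\<close>.\<close>

definition pair_kernel :: "real \<Rightarrow> real" where
  "pair_kernel y = y\<^sup>2 / 2 - y / 2 + 1 / 12"

definition energy :: "'a set \<Rightarrow> ('a \<Rightarrow> real) \<Rightarrow> real" where
  "energy I x = (\<Sum>i\<in>I. \<Sum>j\<in>I. pair_kernel (frac (x i - x j)))"

definition sorted_offset :: "real list \<Rightarrow> nat \<Rightarrow> real" where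
  "sorted_offset ys p = real (length ys) * ys ! p - real p"

lemma pair_kernel_frac_diff:
  assumes "a \<in> {0..<1}" "b \<in> {0..<1}"
  shows "pair_kernel (frac (a - b)) = (a - b)\<^sup>2 / 2 - \<bar>a - b\<bar> / 2 + 1 / 12"
proof (cases "b \<le> a")
  case True
  with assms have "frac (a - b) = a - b" by (simp add: frac_eq)
  with True show ?thesis by (simp add: pair_kernel_def)
next
  case False
  with assms have frac: "frac (a - b) = a - b + 1" by (subst frac_unique_iff) auto
  from False show ?thesis
    unfolding pair_kernel_def frac by (simp add: power2_eq_square field_simps)
qed

lemma sum_of_nat_lessThan: "(\<Sum>i<m. real i) = real m * (real m - 1) / 2"
  by (induction m) (auto simp: algebra_simps)

lemma sum_of_nat_sq_lessThan: "(\<Sum>i<m. (real i)\<^sup>2) = real m * (real m - 1) * (2 * real m - 1) / 6"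
  by (induction m) (auto simp: algebra_simps power2_eq_square)

lemma sum_sum_diff_sq:
  fixes y :: "nat \<Rightarrow> real"
  shows "(\<Sum>i<m. \<Sum>j<m. (y i - y j)\<^sup>2) = 2 * real m * (\<Sum>i<m. (y i)\<^sup>2) - 2 * (\<Sum>i<m. y i)\<^sup>2"
  by (simp add: power2_eq_square algebra_simps sum.distrib sum_subtractf
      sum_distrib_left sum_distrib_right)

lemma sum_sum_abs_diff_sorted:
  fixes y :: "nat \<Rightarrow> real"
  assumes "\<And>i j. j \<le> i \<Longrightarrow> i < m \<Longrightarrow> y j \<le> y i"
  shows "(\<Sum>i<m. \<Sum>j<m. \<bar>y i - y j\<bar>) = 2 * (\<Sum>i<m. (2 * real i - real m + 1) * y i)"
  using assms
proof (induction m)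
  case 0
  then show ?case by simp
next
  case (Suc m)
  have new_terms: "(\<Sum>i<m. \<bar>y m - y i\<bar>) = (\<Sum>i<m. y m - y i)"
    using Suc.prems by (intro sum.cong) auto
  have "(\<Sum>i<Suc m. \<Sum>j<Suc m. \<bar>y i - y j\<bar>)
      = (\<Sum>i<m. \<Sum>j<m. \<bar>y i - y j\<bar>) + 2 * (\<Sum>i<m. y m - y i)"
    using new_terms by (simp add: sum.distrib abs_minus_commute)
  also have "(\<Sum>i<m. \<Sum>j<m. \<bar>y i - y j\<bar>) = 2 * (\<Sum>i<m. (2 * real i - real m + 1) * y i)"
    using Suc by simp
  finally show ?case
    by (simp add: algebra_simps sum.distrib sum_subtractf)
qed

lemma energy_sorted:
  assumes "sorted ys" "set ys \<subseteq> {0..<1}" "ys \<noteq> []"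
  defines "m \<equiv> length ys"
  shows "energy {..<m} ((!) ys)
    = 1 / 12 + (\<Sum>i<m. \<Sum>j<m. (sorted_offset ys i - sorted_offset ys j)\<^sup>2) / (2 * (real m)\<^sup>2)"
proof -
  define y where "y i = ys ! i" for i
  define e where "e = sorted_offset ys"
  have e_y: "e i = real m * y i - real i" for i
    by (simp add: e_def y_def sorted_offset_def m_def)
  have y_range: "i < m \<Longrightarrow> y i \<in> {0..<1}" for i
    using assms(2) unfolding y_def m_def by (auto dest!: nth_mem)
  have y_sorted: "j \<le> i \<Longrightarrow> i < m \<Longrightarrow> y j \<le> y i" for i j
    using assms(1) unfolding y_def m_def by (simp add: sorted_nth_mono)
  have "energy {..<m} ((!) ys)
     = (\<Sum>i<m. \<Sum>j<m. (y i - y j)\<^sup>2 / 2 - \<bar>y i - y j\<bar> / 2 + 1 / 12)"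
    unfolding energy_def y_def[symmetric] using y_range by (simp add: pair_kernel_frac_diff)
  also have "\<dots> = (\<Sum>i<m. \<Sum>j<m. (y i - y j)\<^sup>2) / 2
      - (\<Sum>i<m. \<Sum>j<m. \<bar>y i - y j\<bar>) / 2 + (real m)\<^sup>2 / 12"
    by (simp add: sum.distrib sum_subtractf sum_divide_distrib power2_eq_square)
  finally have energy_y: "energy {..<m} ((!) ys)
     = (\<Sum>i<m. \<Sum>j<m. (y i - y j)\<^sup>2) / 2 - (\<Sum>i<m. \<Sum>j<m. \<bar>y i - y j\<bar>) / 2 + (real m)\<^sup>2 / 12" .
  have sum_e: "(\<Sum>i<m. e i) = real m * (\<Sum>i<m. y i) - real m * (real m - 1) / 2"
    by (simp add: e_y sum_subtractf sum_distrib_left sum_of_nat_lessThan)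
  have sum_e_sq: "(\<Sum>i<m. (e i)\<^sup>2) = (real m)\<^sup>2 * (\<Sum>i<m. (y i)\<^sup>2)
      - 2 * real m * (\<Sum>i<m. real i * y i) + real m * (real m - 1) * (2 * real m - 1) / 6"
    by (simp add: e_y power2_eq_square algebra_simps sum.distrib sum_subtractf sum_distrib_left
        sum_of_nat_sq_lessThan[unfolded power2_eq_square])
  have weighted: "(\<Sum>i<m. (2 * real i - real m + 1) * y i)
      = 2 * (\<Sum>i<m. real i * y i) - (real m - 1) * (\<Sum>i<m. y i)"
    by (simp add: algebra_simps sum.distrib sum_subtractf sum_distrib_left)
  have abs_sum: "(\<Sum>i<m. \<Sum>j<m. \<bar>y i - y j\<bar>) = 2 * (\<Sum>i<m. (2 * real i - real m + 1) * y i)"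
    using y_sorted by (rule sum_sum_abs_diff_sorted)
  have "real m > 0" using assms(3) by (simp add: m_def)
  then show ?thesis
    unfolding energy_y abs_sum sum_sum_diff_sq weighted
      e_def[symmetric] sum_sum_diff_sq[of e] sum_e sum_e_sq
    by (simp add: field_simps) (simp add: algebra_simps power2_eq_square power4_eq_xxxx)
qed

lemma energy_set_eq_sort:
  fixes x :: "'a \<Rightarrow> real"
  assumes "distinct L"
  defines "ys \<equiv> sort (map x L)"
  shows "energy (set L) x = energy {..<length ys} ((!) ys)"
proof -
  have sum_sort: "sum_list (map f ys) = sum_list (map f (map x L))" for f :: "real \<Rightarrow> real"
    unfolding ys_def by (metis mset_map mset_sort sum_mset_sum_list)
  have "energy {..<length ys} ((!) ys) = (\<Sum>a\<leftarrow>ys. \<Sum>b\<leftarrow>ys. pair_kernel (frac (a - b)))"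
    by (simp add: energy_def sum_list_sum_nth atLeast0LessThan)
  also have "\<dots> = (\<Sum>a\<leftarrow>map x L. \<Sum>b\<leftarrow>map x L. pair_kernel (frac (a - b)))"
    by (simp only: sum_sort)
  also have "\<dots> = energy (set L) x"
    using assms(1) by (simp add: energy_def o_def sum_list_distinct_conv_sum_set)
  finally show ?thesis ..
qed

lemma energy_ge:
  assumes "finite I" "I \<noteq> {}" "\<And>i. i \<in> I \<Longrightarrow> x i \<in> {0..<1}"
  shows "1 / 12 \<le> energy I x"
proof -
  obtain L where L: "set L = I" "distinct L" using finite_distinct_list[OF assms(1)] by blast
  define ys where "ys = sort (map x L)"
  have "set ys = x ` I" by (simp add: ys_def L(1))
  then have "set ys \<subseteq> {0..<1}" "ys \<noteq> []" using assms(2,3) by auto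
  moreover have "sorted ys" by (simp add: ys_def)
  ultimately have "energy {..<length ys} ((!) ys) \<ge> 1 / 12"
    by (simp add: energy_sorted sum_nonneg)
  then show ?thesis using energy_set_eq_sort[OF L(2)] by (simp add: L(1) ys_def)
qed

lemma energy_frac: "energy I (\<lambda>i. frac (x i)) = energy I x"
proof -
  have "frac (frac a - frac b) = frac (a - b)" for a b :: real
  proof -
    have "frac a - frac b = (a - b) + of_int (\<lfloor>b\<rfloor> - \<lfloor>a\<rfloor>)" by (simp add: frac_def)
    then show ?thesis by (simp only: frac_add_of_int_right)
  qed
  then show ?thesis by (simp add: energy_def)
qed

lemma count_in_le: "count_in n r a b \<le> n"
proof -
  have "count_in n r a b \<le> card {..<n}"
    unfolding count_in_def by (rule card_mono) auto
  then show ?thesis by simp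
qed

lemma deviation_le_bias:
  assumes "0 \<le> a" "a \<le> b" "b \<le> 1"
  shows "\<bar>real (count_in n r a b) - real n * (b - a)\<bar> \<le> bias n r"
  unfolding bias_def
proof (rule cSUP_upper2)
  show "(a, b) \<in> {(a, b). 0 \<le> a \<and> a \<le> b \<and> b \<le> 1}" using assms by simp
  show "bdd_above ((\<lambda>ab. \<bar>real (count_in n r (fst ab) (snd ab)) - real n * (snd ab - fst ab)\<bar>)
      ` {(a, b). 0 \<le> a \<and> a \<le> b \<and> b \<le> 1})"
  proof (rule bdd_aboveI2)
    fix ab :: "real \<times> real"
    assume "ab \<in> {(a, b). 0 \<le> a \<and> a \<le> b \<and> b \<le> 1}"
    then have "0 \<le> real n * (snd ab - fst ab)" "real n * (snd ab - fst ab) \<le> real n"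
      by (auto simp: mult_left_le)
    moreover have "real (count_in n r (fst ab) (snd ab)) \<le> real n" using count_in_le by simp
    ultimately show "\<bar>real (count_in n r (fst ab) (snd ab)) - real n * (snd ab - fst ab)\<bar> \<le> real n"
      by (simp add: abs_le_iff)
  qed
qed simp

definition sorted_fracs :: "nat \<Rightarrow> (nat \<Rightarrow> real) \<Rightarrow> real list" where
  "sorted_fracs n r = sort (map (\<lambda>i. frac (r i)) [0..<n])"

lemma length_sorted_fracs [simp]: "length (sorted_fracs n r) = n"
  by (simp add: sorted_fracs_def)

lemma sorted_sorted_fracs [simp]: "sorted (sorted_fracs n r)"
  by (simp add: sorted_fracs_def)

lemma set_sorted_fracs: "set (sorted_fracs n r) \<subseteq> {0..<1}"
  by (auto simp: sorted_fracs_def frac_lt_1)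

lemma sorted_fracs_nth_range: "p < n \<Longrightarrow> sorted_fracs n r ! p \<in> {0..<1}"
  by (metis length_sorted_fracs nth_mem set_sorted_fracs subsetD)

lemma count_in_sorted_fracs:
  "count_in n r a b = card {p. p < n \<and> sorted_fracs n r ! p \<in> {a..b}}"
proof -
  let ?xs = "map (\<lambda>i. frac (r i)) [0..<n]"
  let ?P = "\<lambda>z. z \<in> {a..b}"
  have "count_in n r a b = length (filter ?P ?xs)"
    unfolding count_in_def length_filter_conv_card by (intro arg_cong[where f = card]) auto
  also have "\<dots> = length (filter ?P (sorted_fracs n r))"
    unfolding sorted_fracs_def by (metis mset_eq_length mset_filter mset_sort)
  also have "\<dots> = card {p. p < n \<and> sorted_fracs n r ! p \<in> {a..b}}"
    by (simp add: length_filter_conv_card)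
  finally show ?thesis .
qed

lemma bias_ge_one:
  assumes "1 \<le> n"
  shows "1 \<le> bias n r"
proof -
  have "0 < count_in n r (frac (r 0)) (frac (r 0))"
    unfolding count_in_def using assms by (subst card_gt_0_iff) (auto intro!: exI[of _ 0])
  then show ?thesis
    using deviation_le_bias[of "frac (r 0)" "frac (r 0)" n r] by (simp add: less_imp_le[OF frac_lt_1])
qed

lemma sorted_offset_closed_le_bias:
  fixes r :: "nat \<Rightarrow> real"
  assumes "j \<le> i" "i < n"
  defines "ys \<equiv> sorted_fracs n r"
  shows "sorted_offset ys j - sorted_offset ys i + 1 \<le> bias n r"
proof -
  have ys_range: "ys ! p \<in> {0..<1}" if "p < n" for p
    unfolding ys_def using that by (rule sorted_fracs_nth_range)
  have ys_mono: "ys ! j \<le> ys ! i" using assms by (simp add: ys_def sorted_nth_mono)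
  have "{j..i} \<subseteq> {p. p < n \<and> ys ! p \<in> {ys ! j..ys ! i}}"
    using assms by (auto simp: ys_def sorted_nth_mono)
  then have "card {j..i} \<le> count_in n r (ys ! j) (ys ! i)"
    unfolding count_in_sorted_fracs ys_def[symmetric] by (intro card_mono) auto
  then have "i - j + 1 \<le> count_in n r (ys ! j) (ys ! i)"
    using assms(1) by simp
  then have "real i - real j + 1 \<le> real (count_in n r (ys ! j) (ys ! i))"
    using assms(1) by (simp add: of_nat_diff flip: of_nat_le_iff)
  moreover have "\<bar>real (count_in n r (ys ! j) (ys ! i)) - real n * (ys ! i - ys ! j)\<bar> \<le> bias n r"
    using ys_range[of i] ys_range[of j] assms ys_mono by (intro deviation_le_bias) auto
  ultimately show ?thesis by (simp add: sorted_offset_def ys_def algebra_simps)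
qed

text \<open>Shrinking \<open>[y\<^sub>j, y\<^sub>i]\<close> by \<open>d\<close> at both ends leaves at most \<open>i - j - 1\<close> points
  while the expected count drops only by \<open>2 n d\<close>.\<close>

lemma sorted_offset_open_le_bias:
  fixes r :: "nat \<Rightarrow> real"
  assumes "j < i" "i < n"
  defines "ys \<equiv> sorted_fracs n r"
  shows "sorted_offset ys i - sorted_offset ys j + 1 \<le> bias n r"
proof (cases "ys ! j = ys ! i")
  case True
  then show ?thesis
    using assms bias_ge_one[of n r] by (simp add: sorted_offset_def)
next
  case False
  have ys_range: "ys ! p \<in> {0..<1}" if "p < n" for p
    unfolding ys_def using that by (rule sorted_fracs_nth_range)
  have ys_mono: "ys ! p \<le> ys ! q" if "p \<le> q" "q < n" for p q
    using that by (simp add: ys_def sorted_nth_mono)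
  have gap: "ys ! j < ys ! i" using False ys_mono[of j i] assms by simp
  have n_pos: "0 < real n" using assms by simp
  show ?thesis
  proof (rule field_le_epsilon)
    fix \<epsilon> :: real
    assume "0 < \<epsilon>"
    define d where "d = min ((ys ! i - ys ! j) / 2) (\<epsilon> / (2 * real n))"
    have d: "0 < d" "2 * d \<le> ys ! i - ys ! j" "2 * real n * d \<le> \<epsilon>"
      using gap n_pos \<open>0 < \<epsilon>\<close> by (auto simp: d_def min_def field_simps)
    have "{p. p < n \<and> ys ! p \<in> {ys ! j + d..ys ! i - d}} \<subseteq> {Suc j..<i}"
    proof
      fix p assume "p \<in> {p. p < n \<and> ys ! p \<in> {ys ! j + d..ys ! i - d}}"
      then have p: "p < n" "ys ! j + d \<le> ys ! p" "ys ! p \<le> ys ! i - d" by auto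
      have "\<not> p \<le> j" using p d(1) ys_mono[of p j] assms by auto
      moreover have "\<not> i \<le> p" using p d(1) ys_mono[of i p] by auto
      ultimately show "p \<in> {Suc j..<i}" by simp
    qed
    then have "count_in n r (ys ! j + d) (ys ! i - d) \<le> i - Suc j"
      unfolding count_in_sorted_fracs ys_def[symmetric] by (metis card_atLeastLessThan card_mono
          finite_atLeastLessThan)
    then have "real (count_in n r (ys ! j + d) (ys ! i - d)) \<le> real i - real j - 1"
      using assms(1) by (simp add: of_nat_diff flip: of_nat_le_iff)
    moreover have "\<bar>real (count_in n r (ys ! j + d) (ys ! i - d)) - real n * ((ys ! i - d) - (ys ! j + d))\<bar>
        \<le> bias n r"
      using ys_range[of i] ys_range[of j] assms d by (intro deviation_le_bias) auto
    ultimately show "sorted_offset ys i - sorted_offset ys j + 1 \<le> bias n r + \<epsilon>"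
      using d(3) by (simp add: sorted_offset_def ys_def algebra_simps abs_le_iff)
  qed
qed

lemma abs_sorted_offset_diff_le_bias:
  fixes r :: "nat \<Rightarrow> real"
  assumes "i < n" "j < n"
  defines "ys \<equiv> sorted_fracs n r"
  shows "\<bar>sorted_offset ys i - sorted_offset ys j\<bar> \<le> bias n r - 1"
proof -
  have "sorted_offset ys p - sorted_offset ys q \<le> bias n r - 1" if "p < n" "q < n" for p q
  proof (cases p q rule: linorder_cases)
    case less
    then show ?thesis
      using sorted_offset_closed_le_bias[where j = p and i = q and n = n and r = r] that
      by (simp add: ys_def)
  next
    case equal
    then show ?thesis using bias_ge_one[of n r] that by simp
  next
    case greater
    then show ?thesis
      using sorted_offset_open_le_bias[where j = q and i = p and n = n and r = r] that
      by (simp add: ys_def)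
  qed
  from this[of i j] this[of j i] assms show ?thesis by (simp add: abs_le_iff)
qed

lemma energy_le_bias:
  assumes "1 \<le> n"
  shows "energy {..<n} r \<le> 1 / 12 + (bias n r - 1)\<^sup>2 / 2"
proof -
  define ys where "ys = sorted_fracs n r"
  define B where "B = bias n r"
  have "energy {..<n} r = energy (set [0..<n]) (\<lambda>i. frac (r i))"
    by (simp add: energy_frac atLeast0LessThan)
  also have "\<dots> = energy {..<n} ((!) ys)"
    using energy_set_eq_sort[of "[0..<n]" "\<lambda>i. frac (r i)"] by (simp add: ys_def sorted_fracs_def)
  also have "\<dots> = 1 / 12 + (\<Sum>i<n. \<Sum>j<n. (sorted_offset ys i - sorted_offset ys j)\<^sup>2) / (2 * (real n)\<^sup>2)"
    using energy_sorted[of ys] set_sorted_fracs[of n r] assms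
    by (simp add: ys_def flip: length_greater_0_conv)
  also have "\<dots> \<le> 1 / 12 + (\<Sum>i<n. \<Sum>j<n. (B - 1)\<^sup>2) / (2 * (real n)\<^sup>2)"
  proof -
    have "(sorted_offset ys i - sorted_offset ys j)\<^sup>2 \<le> (B - 1)\<^sup>2" if "i < n" "j < n" for i j
      using abs_sorted_offset_diff_le_bias[OF that, of r] unfolding ys_def B_def
      by (metis abs_ge_zero order_trans power2_abs power_mono)
    then show ?thesis by (intro add_left_mono divide_right_mono sum_mono) auto
  qed
  also have "\<dots> = 1 / 12 + (B - 1)\<^sup>2 / 2"
    using assms by (simp add: power2_eq_square)
  finally show ?thesis by (simp add: B_def)
qed

definition pair_kernel_primitive :: "real \<Rightarrow> real" where
  "pair_kernel_primitive y = y ^ 3 / 6 - y\<^sup>2 / 4 + y / 12"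

lemma pair_kernel_primitive_deriv: "(pair_kernel_primitive has_real_derivative pair_kernel y) (at y)"
  unfolding pair_kernel_primitive_def pair_kernel_def
  by (auto intro!: derivative_eq_intros simp: field_simps power2_eq_square)

lemma pair_kernel_primitive_shift: "pair_kernel_primitive (y + 1) = pair_kernel_primitive y + y\<^sup>2 / 2"
  unfolding pair_kernel_primitive_def by (simp add: field_simps power2_eq_square power3_eq_cube)

lemma abs_pair_kernel_primitive_le:
  assumes "y \<in> {0..1}"
  shows "\<bar>pair_kernel_primitive y\<bar> \<le> 1 / 2"
proof -
  have y: "0 \<le> y" "y \<le> 1" using assms by auto
  then have "y\<^sup>2 \<le> 1" "y ^ 3 \<le> 1" "0 \<le> y\<^sup>2" "0 \<le> y ^ 3" by (auto intro: power_le_one)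
  with y have "- 1 / 2 \<le> pair_kernel_primitive y" "pair_kernel_primitive y \<le> 1 / 2"
    unfolding pair_kernel_primitive_def by linarith+
  then show ?thesis by (simp add: abs_le_iff)
qed

lemma left_half_square_deriv: "((\<lambda>y::real. if y < 0 then y\<^sup>2 / 2 else 0) has_real_derivative 0) (at 0)"
proof -
  have "((\<lambda>y. min y 0 / 2) \<longlongrightarrow> min 0 0 / 2) (at (0::real))"
    by (intro tendsto_intros) simp_all
  then have lim: "((\<lambda>y. min y 0 / 2) \<longlongrightarrow> 0) (at (0::real))" by simp
  have ev: "\<forall>\<^sub>F y in at (0::real). min y 0 / 2 = ((if y < 0 then y\<^sup>2 / 2 else 0) - 0) / (y - 0)"
    unfolding eventually_at_filter by (auto simp: min_def power2_eq_square)
  show ?thesis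
    unfolding has_field_derivative_iff using tendsto_cong[OF ev] lim by simp
qed

text \<open>Since \<open>pair_kernel_primitive 0 = pair_kernel_primitive 1\<close> and the kernel takes the same
  value at \<open>0\<close> and \<open>1\<close>, the periodic extension is differentiable also at the integers \<open>m\<close>:
  near \<open>m\<close> it is \<open>pair_kernel_primitive (u - m)\<close> plus a correction \<open>(u - m)\<^sup>2 / 2\<close> for \<open>u < m\<close>.\<close>

lemma pair_kernel_primitive_frac_deriv:
  "((\<lambda>u. pair_kernel_primitive (frac u)) has_real_derivative pair_kernel (frac u)) (at u)"
proof (cases "u \<in> \<int>")
  case False
  define m where "m = \<lfloor>u\<rfloor>"
  have frac_u: "frac u = u - of_int m" unfolding m_def frac_def by simp
  have u_in: "u \<in> {of_int m <..< of_int m + 1}"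
    using False frac_u frac_lt_1[of u] frac_gt_0_iff[of u] by (auto simp del: frac_gt_0_iff)
  have "((\<lambda>x. pair_kernel_primitive (x - of_int m)) has_real_derivative pair_kernel (u - of_int m) * 1) (at u)"
    by (rule DERIV_chain2[OF pair_kernel_primitive_deriv]) (auto intro!: derivative_eq_intros)
  then show ?thesis
    unfolding frac_u mult_1_right
  proof (rule has_field_derivative_transform_within_open[OF _ _ u_in])
    fix x assume "x \<in> {real_of_int m <..< of_int m + 1}"
    then have "frac x = x - of_int m" by (subst frac_unique_iff) (auto simp: Ints_def)
    then show "pair_kernel_primitive (x - of_int m) = pair_kernel_primitive (frac x)" by simp
  qed simp
next
  case True
  then obtain m where u: "u = of_int m" by (auto elim: Ints_cases)
  let ?corr = "\<lambda>y::real. if y < 0 then y\<^sup>2 / 2 else 0"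
  have "((\<lambda>x. pair_kernel_primitive (x - of_int m)) has_real_derivative pair_kernel (u - of_int m) * 1) (at u)"
    by (rule DERIV_chain2[OF pair_kernel_primitive_deriv]) (auto intro!: derivative_eq_intros)
  moreover have "((\<lambda>x. ?corr (x - of_int m)) has_real_derivative 0 * 1) (at u)"
    by (rule DERIV_chain2) (auto simp: u intro!: derivative_eq_intros left_half_square_deriv)
  ultimately have deriv: "((\<lambda>x. pair_kernel_primitive (x - of_int m) + ?corr (x - of_int m))
      has_real_derivative pair_kernel (frac u)) (at u)"
    using DERIV_add u by fastforce
  have u_in: "u \<in> {of_int m - 1 <..< of_int m + 1}" using u by simp
  show ?thesis
  proof (rule has_field_derivative_transform_within_open[OF deriv _ u_in])
    fix x assume x: "x \<in> {real_of_int m - 1 <..< of_int m + 1}"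
    show "pair_kernel_primitive (x - of_int m) + ?corr (x - of_int m) = pair_kernel_primitive (frac x)"
    proof (cases "x < of_int m")
      case True
      have "x - (x - of_int m + 1) = of_int (m - 1)" by simp
      then have "frac x = x - of_int m + 1"
        using x True by (subst frac_unique_iff) (auto simp del: of_int_diff)
      then show ?thesis using True by (simp add: pair_kernel_primitive_shift)
    next
      case False
      then have "frac x = x - of_int m" using x by (subst frac_unique_iff) (auto simp: Ints_def)
      then show ?thesis using False by simp
    qed
  qed simp
qed

lemma has_integral_sum_pair_kernel:
  fixes c d :: "'a \<Rightarrow> real"
  assumes "finite I" "\<And>i. i \<in> I \<Longrightarrow> d i \<noteq> 0" "0 \<le> T"
  shows "((\<lambda>t. \<Sum>i\<in>I. pair_kernel (frac (c i + d i * t))) has_integral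
    (\<Sum>i\<in>I. (pair_kernel_primitive (frac (c i + d i * T)) - pair_kernel_primitive (frac (c i))) / d i))
    {0..T}"
proof (intro has_integral_sum[OF assms(1)])
  fix i assume i: "i \<in> I"
  define F where "F t = pair_kernel_primitive (frac (c i + d i * t)) / d i" for t
  have "(F has_real_derivative pair_kernel (frac (c i + d i * t))) (at t)" for t
  proof -
    have "((\<lambda>t. pair_kernel_primitive (frac (c i + d i * t))) has_real_derivative
        pair_kernel (frac (c i + d i * t)) * d i) (at t)"
      by (rule DERIV_chain2[OF pair_kernel_primitive_frac_deriv]) (auto intro!: derivative_eq_intros)
    then have "(F has_real_derivative pair_kernel (frac (c i + d i * t)) * d i / d i) (at t)"
      unfolding F_def by (rule DERIV_cdivide)
    then show ?thesis using assms(2)[OF i] by simp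
  qed
  then have "((\<lambda>t. pair_kernel (frac (c i + d i * t))) has_integral F T - F 0) {0..T}"
    using assms(3) by (intro fundamental_theorem_of_calculus)
      (auto simp: has_real_derivative_iff_has_vector_derivative intro: has_vector_derivative_at_within)
  then show "((\<lambda>t. pair_kernel (frac (c i + d i * t))) has_integral
      (pair_kernel_primitive (frac (c i + d i * T)) - pair_kernel_primitive (frac (c i))) / d i) {0..T}"
    by (simp add: F_def diff_divide_distrib)
qed

text \<open>The time average over \<open>[0, T]\<close> is \<open>O(1/T)\<close> because the primitive of the kernel is
  periodic and bounded.\<close>

lemma exists_sum_pair_kernel_ge:
  fixes c d :: "'a \<Rightarrow> real"
  assumes "finite I" "\<And>i. i \<in> I \<Longrightarrow> d i \<noteq> 0" "0 < \<epsilon>"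
  shows "\<exists>t. - \<epsilon> \<le> (\<Sum>i\<in>I. pair_kernel (frac (c i + d i * t)))"
proof (rule ccontr)
  assume "\<not> ?thesis"
  then have below: "(\<Sum>i\<in>I. pair_kernel (frac (c i + d i * t))) \<le> - \<epsilon>" for t
    by (meson not_le less_imp_le)
  define C where "C = (\<Sum>i\<in>I. 1 / \<bar>d i\<bar>)"
  define T where "T = (C + 1) / \<epsilon>"
  define J where "J = (\<Sum>i\<in>I. (pair_kernel_primitive (frac (c i + d i * T))
      - pair_kernel_primitive (frac (c i))) / d i)"
  have "0 \<le> C" unfolding C_def by (simp add: sum_nonneg)
  then have "0 \<le> T" using assms(3) by (simp add: T_def)
  have "J \<le> T * (- \<epsilon>)"
  proof (rule has_integral_le)
    show "((\<lambda>t. \<Sum>i\<in>I. pair_kernel (frac (c i + d i * t))) has_integral J) {0..T}"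
      unfolding J_def using assms(1,2) \<open>0 \<le> T\<close> by (rule has_integral_sum_pair_kernel)
    show "((\<lambda>t. - \<epsilon>) has_integral T * (- \<epsilon>)) {0..T}"
      using has_integral_const_real[of "- \<epsilon>" 0 T] \<open>0 \<le> T\<close> by simp
  qed (rule below)
  also have "\<dots> = - (C + 1)" using assms(3) by (simp add: T_def)
  finally have "J \<le> - (C + 1)" .
  moreover have "- C \<le> J"
  proof -
    have "- (1 / \<bar>d i\<bar>) \<le> (pair_kernel_primitive (frac (c i + d i * T))
        - pair_kernel_primitive (frac (c i))) / d i" if "i \<in> I" for i
    proof -
      have "\<bar>pair_kernel_primitive (frac (c i + d i * T)) - pair_kernel_primitive (frac (c i))\<bar> \<le> 1"
        using abs_pair_kernel_primitive_le[of "frac (c i + d i * T)"]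
          abs_pair_kernel_primitive_le[of "frac (c i)"]
        by (simp add: less_imp_le[OF frac_lt_1])
      then have "\<bar>(pair_kernel_primitive (frac (c i + d i * T)) - pair_kernel_primitive (frac (c i)))
          / d i\<bar> \<le> 1 / \<bar>d i\<bar>"
        by (simp add: abs_divide divide_right_mono)
      then show ?thesis by linarith
    qed
    then show ?thesis unfolding C_def J_def by (auto simp: sum_negf[symmetric] intro: sum_mono)
  qed
  ultimately show False by simp
qed

lemma energy_moving_split:
  fixes s v :: "'a \<Rightarrow> real"
  assumes "finite I"
  shows "energy I (\<lambda>i. s i + v i * t) = (\<Sum>w\<in>v ` I. energy {i\<in>I. v i = w} s)
    + (\<Sum>p\<in>{p\<in>I \<times> I. v (fst p) \<noteq> v (snd p)}.
        pair_kernel (frac ((s (fst p) - s (snd p)) + (v (fst p) - v (snd p)) * t)))"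
proof -
  define f where "f p = pair_kernel (frac ((s (fst p) - s (snd p)) + (v (fst p) - v (snd p)) * t))"
    for p :: "'a \<times> 'a"
  define G where "G w = {i\<in>I. v i = w}" for w
  define Cross where "Cross = {p\<in>I \<times> I. v (fst p) \<noteq> v (snd p)}"
  have fin_G: "finite (G w)" for w using assms by (simp add: G_def)
  have "energy I (\<lambda>i. s i + v i * t) = sum f (I \<times> I)"
    by (simp add: energy_def f_def sum.cartesian_product' algebra_simps)
  also have "I \<times> I = (\<Union>w\<in>v ` I. G w \<times> G w) \<union> Cross"
    unfolding G_def Cross_def by auto
  also have "sum f \<dots> = sum f (\<Union>w\<in>v ` I. G w \<times> G w) + sum f Cross"
  proof (rule sum.union_disjoint)
    show "finite (\<Union>w\<in>v ` I. G w \<times> G w)" using assms fin_G by simp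
    show "finite Cross" using assms by (simp add: Cross_def)
    show "(\<Union>w\<in>v ` I. G w \<times> G w) \<inter> Cross = {}" by (auto simp: G_def Cross_def)
  qed
  also have "sum f (\<Union>w\<in>v ` I. G w \<times> G w) = (\<Sum>w\<in>v ` I. sum f (G w \<times> G w))"
  proof (rule sum.UNION_disjoint)
    show "finite (v ` I)" using assms by simp
    show "\<forall>w\<in>v ` I. finite (G w \<times> G w)" using fin_G by simp
    show "\<forall>w1\<in>v ` I. \<forall>w2\<in>v ` I. w1 \<noteq> w2 \<longrightarrow> G w1 \<times> G w1 \<inter> G w2 \<times> G w2 = {}"
      unfolding G_def by blast
  qed
  also have "(\<Sum>w\<in>v ` I. sum f (G w \<times> G w)) = (\<Sum>w\<in>v ` I. energy (G w) s)"
    by (intro sum.cong refl) (auto simp: energy_def f_def G_def sum.cartesian_product')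
  finally show ?thesis by (simp add: f_def G_def Cross_def)
qed

theorem theorem2p1:
  fixes n :: nat and s v :: "nat \<Rightarrow> real"
  assumes "n \<ge> 1"
    and "\<And>i. i < n \<Longrightarrow> 0 \<le> s i \<and> s i < 1"
  shows "\<exists>t :: real. bias n (\<lambda>i. s i + v i * t) \<ge> sqrt (real (card (v ` {..<n})) / 12)"
proof -
  define k where "k = card (v ` {..<n})"
  define Cross where "Cross = {p \<in> {..<n} \<times> {..<n}. v (fst p) \<noteq> v (snd p)}"
  obtain t where cross: "- (1 / 12) \<le> (\<Sum>p\<in>Cross.
      pair_kernel (frac ((s (fst p) - s (snd p)) + (v (fst p) - v (snd p)) * t)))"
    using exists_sum_pair_kernel_ge[where I = Cross and \<epsilon> = "1 / 12"
        and c = "\<lambda>p. s (fst p) - s (snd p)" and d = "\<lambda>p. v (fst p) - v (snd p)"]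
    unfolding Cross_def by auto
  define r where "r = (\<lambda>i. s i + v i * t)"
  have "real k / 12 = (\<Sum>w\<in>v ` {..<n}. 1 / 12)" by (simp add: k_def)
  also have "\<dots> \<le> (\<Sum>w\<in>v ` {..<n}. energy {i\<in>{..<n}. v i = w} s)"
    using assms(2) by (intro sum_mono energy_ge) auto
  finally have "real k / 12 - 1 / 12 \<le> energy {..<n} r"
    using energy_moving_split[of "{..<n}" s v t] cross by (simp add: r_def Cross_def)
  moreover have "energy {..<n} r \<le> 1 / 12 + (bias n r - 1)\<^sup>2 / 2"
    using assms(1) by (rule energy_le_bias)
  ultimately have "real k \<le> 2 + 6 * (bias n r - 1)\<^sup>2" by linarith
  moreover have "1 \<le> bias n r" using assms(1) by (rule bias_ge_one)
  then have "(bias n r - 1)\<^sup>2 \<le> (bias n r)\<^sup>2" and "1 \<le> (bias n r)\<^sup>2"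
    by (auto intro: power_mono simp: one_le_power)
  ultimately have "real k / 12 \<le> (bias n r)\<^sup>2" by linarith
  with \<open>1 \<le> bias n r\<close> have "sqrt (real k / 12) \<le> bias n r"
    by (intro real_le_lsqrt) auto
  then show ?thesis unfolding r_def k_def by blast
qed

end
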